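(* Let $\sigma:[0,\infty)\to[0,\infty)$ be nondecreasing with $\lim_{t\to\infty}\sigma(t)=\infty$. Assume that $\sigma(t)=o(t)$ as $t\to\infty$ and that $\sigma\sim(\sigma^{\star})_{\star}$. Then $\gamma(\sigma)=\gamma((\sigma^{\star})^{\iota})+1$.
   Context: Upper Legendre conjugate: $\sigma^{\star}(s):=\sup_{t\ge0}\{\sigma(t)-st\}$ for $s>0$ (finite under $\sigma(t)=o(t)$; nonincreasing, tends to $\infty$ as $s\to0$). For $h:(0,\infty)\to[0,\infty)$ nonincreasing with $\lim_{t\to0}h(t)=\infty$, the lower Legendre conjugate is $h_{\star}(t):=\inf_{s>0}\{h(s)+ts\}$; $(\sigma^{\star})_{\star}$ is the least concave majorant of $\sigma$. For a positive function $f$ on a subinterval of $(0,\infty)$, $f^{\iota}(t):=f(1/t)$; thus $(\sigma^{\star})^{\iota}(t)=\sigma^{\star}(1/t)$, a nondecreasing function tending to $\infty$. For functions $\sigma,\tau$ on an unbounded interval $I\subseteq[0,\infty)$, $\sigma\sim\tau$ means there is $C\ge1$ with $C^{-1}\tau(t)-C\le\sigma(t)\le C\tau(t)+C$ on $I$. For a nondecreasing function $\sigma$ tending to $\infty$ and $\gamma>0$, $(P_{\sigma,\gamma})$ holds if there is $K>1$ with $\limsup_{t\to\infty}\sigma(K^{\gamma}t)/\sigma(t)<K$; $\gamma(\sigma):=\sup\{\gamma>0:(P_{\sigma,\gamma})\text{ holds}\}$, and $:=0$ if none holds. *)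

theory Defs
  imports "HOL-Analysis.Analysis" "HOL-Library.Landau_Symbols"
begin

definition upper_conj :: "(real \<Rightarrow> real) \<Rightarrow> real \<Rightarrow> real" where
  "upper_conj \<sigma> s = (SUP t\<in>{0..}. \<sigma> t - s * t)"

definition lower_conj :: "(real \<Rightarrow> real) \<Rightarrow> real \<Rightarrow> real" where
  "lower_conj h t = (INF s\<in>{0<..}. h s + t * s)"

definition iota :: "(real \<Rightarrow> real) \<Rightarrow> real \<Rightarrow> real" where
  "iota f t = f (1 / t)"

definition equiv_on :: "real set \<Rightarrow> (real \<Rightarrow> real) \<Rightarrow> (real \<Rightarrow> real) \<Rightarrow> bool" where
  "equiv_on I \<sigma> \<tau> \<longleftrightarrow>
     (\<exists>C\<ge>1. \<forall>t\<in>I. \<tau> t / C - C \<le> \<sigma> t \<and> \<sigma> t \<le> C * \<tau> t + C)"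

definition prop_P :: "(real \<Rightarrow> real) \<Rightarrow> real \<Rightarrow> bool" where
  "prop_P \<sigma> \<gamma> \<longleftrightarrow>
     (\<exists>K>1. Limsup at_top (\<lambda>t. ereal (\<sigma> (K powr \<gamma> * t) / \<sigma> t)) < ereal K)"

definition gamma_idx :: "(real \<Rightarrow> real) \<Rightarrow> ereal" where
  "gamma_idx \<sigma> = (if \<exists>\<gamma>>0. prop_P \<sigma> \<gamma>
                    then Sup (ereal ` {\<gamma>. \<gamma> > 0 \<and> prop_P \<sigma> \<gamma>}) else 0)"

end

theory Submission
  imports Defs
begin

text \<open>
  Let h = \<sigma>^\<star> and \<tau> = h_\<star>. As an infimum of affine functions with nonnegative
  intercepts, \<tau> satisfies \<tau>(l u) \<le> l \<tau>(u) for l \<ge> 1, which through \<sigma> \<sim> \<tau> gives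
  (P_{\<sigma>,\<gamma>}) for every \<gamma> < 1. A dilation bound \<sigma>(K^\<gamma> y) \<le> K \<sigma>(y) becomes, after the
  substitution x = K^\<gamma> y in the supremum defining h, the bound h(s / K^(\<gamma>-1)) \<le> K h(s)
  for small s, i.e. (P_{h^\<iota>,\<gamma>'}) for \<gamma>' < \<gamma> - 1. Conversely, iterating h(s / K^\<gamma>) \<le> K h(s)
  and passing to the lower conjugate gives \<tau>(K^((\<gamma>+1) n) u) \<le> K^n \<tau>(u) for large u; for n
  large this absorbs the constant lost in \<sigma> \<sim> \<tau> and yields (P_{\<sigma>,\<gamma>'}) for \<gamma>' < \<gamma> + 1.
\<close>

lemma prop_PI:
  assumes "1 < M" "F < M"
    and "eventually (\<lambda>t. f (M powr \<gamma> * t) \<le> F * f t) at_top"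
    and "eventually (\<lambda>t. 0 < f t) at_top"
  shows "prop_P f \<gamma>"
proof -
  have "eventually (\<lambda>t. ereal (f (M powr \<gamma> * t) / f t) \<le> ereal F) at_top"
    using assms(3,4) by eventually_elim (simp add: divide_le_eq)
  then have "Limsup at_top (\<lambda>t. ereal (f (M powr \<gamma> * t) / f t)) \<le> ereal F"
    by (rule Limsup_bounded)
  also have "\<dots> < ereal M"
    using assms(2) by simp
  finally show ?thesis
    unfolding prop_P_def using assms(1) by blast
qed

lemma prop_PE:
  assumes "prop_P f \<gamma>" "eventually (\<lambda>t. 0 < f t) at_top"
  obtains K where "1 < K" "eventually (\<lambda>t. f (K powr \<gamma> * t) \<le> K * f t) at_top"
proof -
  obtain K where K: "1 < K"
    and "Limsup at_top (\<lambda>t. ereal (f (K powr \<gamma> * t) / f t)) < ereal K"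
    using assms(1) unfolding prop_P_def by blast
  then have "eventually (\<lambda>t. ereal (f (K powr \<gamma> * t) / f t) < ereal K) at_top"
    using Limsup_lessD by blast
  then have "eventually (\<lambda>t. f (K powr \<gamma> * t) \<le> K * f t) at_top"
    using assms(2) by eventually_elim (simp add: divide_less_eq)
  with K show ?thesis
    by (rule that)
qed

lemma gamma_idx_nonneg: "0 \<le> gamma_idx f"
proof (cases "\<exists>\<gamma>>0. prop_P f \<gamma>")
  case True
  then obtain \<gamma> where "0 < \<gamma>" "prop_P f \<gamma>"
    by blast
  then have "ereal \<gamma> \<le> gamma_idx f"
    unfolding gamma_idx_def by (auto intro!: Sup_upper)
  moreover have "0 \<le> ereal \<gamma>"
    using \<open>0 < \<gamma>\<close> by simp
  ultimately show ?thesis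
    by (rule order_trans[rotated])
qed (auto simp: gamma_idx_def)

lemma gamma_idx_le:
  assumes "0 \<le> b" "\<And>\<gamma>. 0 < \<gamma> \<Longrightarrow> prop_P f \<gamma> \<Longrightarrow> ereal \<gamma> \<le> b"
  shows "gamma_idx f \<le> b"
  using assms unfolding gamma_idx_def by (auto intro!: Sup_least)

lemma le_gamma_idx:
  assumes "0 < x" "\<And>r. 0 < r \<Longrightarrow> r < x \<Longrightarrow> prop_P f r"
  shows "ereal x \<le> gamma_idx f"
proof (rule dense_le_bounded[of 0])
  fix w :: ereal
  assume w: "0 < w" "w < ereal x"
  then obtain r where r: "w = ereal r"
    by (cases w) auto
  with w assms(2) have "0 < r" "prop_P f r"
    by auto
  then show "w \<le> gamma_idx f"
    unfolding r gamma_idx_def by (auto intro!: Sup_upper)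
qed (use assms(1) in simp)

lemma gamma_idx_le_plus_one:
  assumes down: "\<And>\<gamma> \<gamma>'. 1 < \<gamma> \<Longrightarrow> prop_P f \<gamma> \<Longrightarrow> 0 < \<gamma>' \<Longrightarrow> \<gamma>' < \<gamma> - 1 \<Longrightarrow> prop_P g \<gamma>'"
  shows "gamma_idx f \<le> gamma_idx g + 1"
proof (rule gamma_idx_le)
  have g_nonneg: "0 \<le> gamma_idx g"
    by (rule gamma_idx_nonneg)
  then show "0 \<le> gamma_idx g + 1"
    by (simp add: add_nonneg_nonneg)
  fix \<gamma>
  assume "0 < \<gamma>" "prop_P f \<gamma>"
  show "ereal \<gamma> \<le> gamma_idx g + 1"
  proof (cases "\<gamma> \<le> 1")
    case True
    then have "ereal \<gamma> \<le> 0 + 1"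
      by simp
    also have "\<dots> \<le> gamma_idx g + 1"
      using g_nonneg by (rule add_right_mono)
    finally show ?thesis .
  next
    case False
    then have "ereal (\<gamma> - 1) \<le> gamma_idx g"
      using \<open>prop_P f \<gamma>\<close> by (intro le_gamma_idx down) auto
    then have "ereal (\<gamma> - 1) + 1 \<le> gamma_idx g + 1"
      by (rule add_right_mono)
    then show ?thesis
      by simp
  qed
qed

lemma plus_one_le_gamma_idx:
  assumes below_one: "\<And>\<gamma>. 0 < \<gamma> \<Longrightarrow> \<gamma> < 1 \<Longrightarrow> prop_P f \<gamma>"
    and up: "\<And>\<gamma> \<gamma>'. 0 < \<gamma> \<Longrightarrow> prop_P g \<gamma> \<Longrightarrow> 0 < \<gamma>' \<Longrightarrow> \<gamma>' < \<gamma> + 1 \<Longrightarrow> prop_P f \<gamma>'"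
  shows "gamma_idx g + 1 \<le> gamma_idx f"
proof -
  have "ereal 1 \<le> gamma_idx f"
    by (rule le_gamma_idx) (auto intro: below_one)
  have "gamma_idx g \<le> gamma_idx f - 1"
  proof (rule gamma_idx_le)
    show "0 \<le> gamma_idx f - 1"
      using \<open>ereal 1 \<le> gamma_idx f\<close> by (simp add: ereal_le_minus one_ereal_def)
    fix \<gamma>
    assume "0 < \<gamma>" "prop_P g \<gamma>"
    then have "ereal (\<gamma> + 1) \<le> gamma_idx f"
      by (intro le_gamma_idx up) auto
    then show "ereal \<gamma> \<le> gamma_idx f - 1"
      by (simp add: ereal_le_minus)
  qed
  then show ?thesis
    by (simp add: ereal_le_minus)
qed

lemma upper_conj_le:
  assumes "\<And>x. 0 \<le> x \<Longrightarrow> \<sigma> x - s * x \<le> B"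
  shows "upper_conj \<sigma> s \<le> B"
  unfolding upper_conj_def using assms by (intro cSUP_least) auto

lemma lower_conj_le:
  assumes "\<And>s. 0 < s \<Longrightarrow> 0 \<le> h s" "0 < s" "0 \<le> u"
  shows "lower_conj h u \<le> h s + u * s"
  unfolding lower_conj_def using assms
  by (intro cINF_lower bdd_belowI[where m = 0]) (auto intro!: add_nonneg_nonneg)

lemma lower_conj_ge:
  assumes "\<And>s. 0 < s \<Longrightarrow> m \<le> h s + u * s"
  shows "m \<le> lower_conj h u"
  unfolding lower_conj_def using assms by (intro cINF_greatest) auto

lemma lower_conj_mult_le:
  assumes h_nonneg: "\<And>s. 0 < s \<Longrightarrow> 0 \<le> h s" and "1 \<le> l" "0 \<le> u"
  shows "lower_conj h (l * u) \<le> l * lower_conj h u"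
proof -
  have "lower_conj h (l * u) / l \<le> lower_conj h u"
  proof (rule lower_conj_ge)
    fix s :: real
    assume "0 < s"
    have "lower_conj h (l * u) \<le> h s + l * u * s"
      using lower_conj_le[of h s "l * u"] h_nonneg \<open>0 < s\<close> assms by simp
    also have "\<dots> \<le> l * (h s + u * s)"
      using h_nonneg[OF \<open>0 < s\<close>] assms by (simp add: algebra_simps mult_le_cancel_right1)
    finally show "lower_conj h (l * u) / l \<le> h s + u * s"
      using assms by (simp add: divide_le_eq mult.commute)
  qed
  then show ?thesis
    using assms by (simp add: divide_le_eq mult.commute)
qed

lemma dilation_bound_power:
  fixes h :: "real \<Rightarrow> real"
  assumes "1 \<le> a" "0 \<le> K"
    and step: "\<And>s. 0 < s \<Longrightarrow> s < s0 \<Longrightarrow> h (s / a) \<le> K * h s"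
    and "0 < s" "s < s0"
  shows "h (s / a ^ n) \<le> K ^ n * h s"
proof (induction n)
  case (Suc n)
  have "1 \<le> a ^ n"
    using assms by (simp add: one_le_power)
  then have "s / a ^ n \<le> s"
    using assms by (simp add: divide_le_eq mult_le_cancel_left1)
  then have "h (s / a ^ n / a) \<le> K * h (s / a ^ n)"
    using assms by (intro step) auto
  also have "\<dots> \<le> K * (K ^ n * h s)"
    using Suc.IH assms by (simp add: mult_left_mono)
  finally show ?case
    by (simp add: divide_divide_eq_left mult_ac)
qed simp

text \<open>
  For r < s0 the competitor r / b bounds the infimum at b F u; for r \<ge> s0 the single
  competitor s0 / (2 b) already does, once u is large.
\<close>

lemma lower_conj_dilation:
  assumes h_nonneg: "\<And>s. 0 < s \<Longrightarrow> 0 \<le> h s"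
    and "0 < b" "0 < F" "0 < s0"
    and dil: "\<And>s. 0 < s \<Longrightarrow> s < s0 \<Longrightarrow> h (s / b) \<le> F * h s"
  shows "eventually (\<lambda>u. lower_conj h (b * F * u) \<le> F * lower_conj h u) at_top"
  using eventually_ge_at_top[of 0] eventually_ge_at_top[of "2 * h (s0 / (2 * b)) / (F * s0)"]
proof eventually_elim
  case (elim u)
  define \<epsilon> where "\<epsilon> = s0 / (2 * b)"
  have "0 < \<epsilon>"
    using assms by (simp add: \<epsilon>_def)
  have u: "0 \<le> u" "2 * h \<epsilon> \<le> F * s0 * u"
    using elim assms by (simp_all add: \<epsilon>_def divide_le_eq mult.commute)
  have "lower_conj h (b * F * u) \<le> h \<epsilon> + b * F * u * \<epsilon>"
    using lower_conj_le[of h \<epsilon> "b * F * u"] h_nonneg \<open>0 < \<epsilon>\<close> u assms by simp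
  also have "\<dots> = h \<epsilon> + F * s0 * u / 2"
    using assms by (simp add: \<epsilon>_def)
  also have "\<dots> \<le> F * (s0 * u)"
    using u by simp
  finally have large_r: "lower_conj h (b * F * u) \<le> F * (s0 * u)" .
  have "lower_conj h (b * F * u) / F \<le> lower_conj h u"
  proof (rule lower_conj_ge)
    fix r :: real
    assume "0 < r"
    have "lower_conj h (b * F * u) \<le> F * (h r + u * r)"
    proof (cases "r < s0")
      case True
      have "lower_conj h (b * F * u) \<le> h (r / b) + b * F * u * (r / b)"
        using lower_conj_le[of h "r / b" "b * F * u"] h_nonneg \<open>0 < r\<close> u assms by simp
      also have "\<dots> \<le> F * (h r + u * r)"
        using dil[OF \<open>0 < r\<close> True] assms by (simp add: algebra_simps)
      finally show ?thesis .
    next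
      case False
      then have "s0 * u \<le> h r + u * r"
        using mult_right_mono[of s0 r u] u h_nonneg[OF \<open>0 < r\<close>] by (simp add: mult.commute)
      with large_r show ?thesis
        using assms by (smt (verit) mult_left_mono)
    qed
    then show "lower_conj h (b * F * u) / F \<le> h r + u * r"
      using assms by (simp add: divide_le_eq mult.commute)
  qed
  then show ?case
    using assms by (simp add: divide_le_eq mult.commute)
qed

locale sublinear_growth =
  fixes \<sigma> :: "real \<Rightarrow> real"
  assumes mono: "mono_on {0..} \<sigma>"
    and nonneg: "\<And>t. 0 \<le> t \<Longrightarrow> 0 \<le> \<sigma> t"
    and tendsto_top: "filterlim \<sigma> at_top at_top"
    and little_o: "\<sigma> \<in> o[at_top](\<lambda>t. t)"
begin

lemma mono_le: "0 \<le> x \<Longrightarrow> x \<le> y \<Longrightarrow> \<sigma> x \<le> \<sigma> y"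
  using mono by (auto simp: mono_on_def)

lemma eventually_pos: "eventually (\<lambda>t. 0 < \<sigma> t) at_top"
  using tendsto_top by (simp add: filterlim_at_top_dense)

lemma bdd_above_upper_conj:
  assumes "0 < s"
  shows "bdd_above ((\<lambda>t. \<sigma> t - s * t) ` {0..})"
proof -
  obtain T where T: "\<And>t. T \<le> t \<Longrightarrow> \<sigma> t \<le> s * t"
  proof -
    have "eventually (\<lambda>t. \<sigma> t \<le> s * t) at_top"
      using landau_o.smallD[OF little_o assms] eventually_ge_at_top[of 0]
      by eventually_elim (use nonneg in auto)
    then show ?thesis
      using that by (auto simp: eventually_at_top_linorder)
  qed
  let ?T = "max T 0"
  have "\<sigma> t - s * t \<le> \<sigma> ?T" if "0 \<le> t" for t
  proof (cases "?T \<le> t")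
    case True
    then show ?thesis
      using T[of t] nonneg[of ?T] by simp
  next
    case False
    moreover have "0 \<le> s * t"
      using that assms by simp
    ultimately show ?thesis
      using mono_le[of t ?T] that by simp
  qed
  then show ?thesis
    by (auto simp: bdd_above_def)
qed

lemma upper_conj_ge: "0 < s \<Longrightarrow> 0 \<le> x \<Longrightarrow> \<sigma> x - s * x \<le> upper_conj \<sigma> s"
  unfolding upper_conj_def by (rule cSUP_upper[OF _ bdd_above_upper_conj]) auto

lemma upper_conj_nonneg: "0 < s \<Longrightarrow> 0 \<le> upper_conj \<sigma> s"
  using upper_conj_ge[of s 0] nonneg[of 0] by simp

lemma filterlim_iota_upper_conj: "filterlim (iota (upper_conj \<sigma>)) at_top at_top"
  unfolding filterlim_at_top
proof
  fix c
  have "eventually (\<lambda>x. 1 \<le> x \<and> c + 1 \<le> \<sigma> x) at_top"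
    using tendsto_top eventually_ge_at_top[of 1] by (auto simp: filterlim_at_top intro: eventually_conj)
  then obtain x where x: "1 \<le> x" "c + 1 \<le> \<sigma> x"
    using eventually_happens'[OF trivial_limit_at_top_linorder] by blast
  have "c \<le> upper_conj \<sigma> (1 / t)" if "x \<le> t" for t
  proof -
    have "\<sigma> x - x / t \<le> upper_conj \<sigma> (1 / t)"
      using upper_conj_ge[of "1 / t" x] x that by simp
    moreover have "x / t \<le> 1"
      using x that by simp
    ultimately show ?thesis
      using x by linarith
  qed
  then show "eventually (\<lambda>t. c \<le> iota (upper_conj \<sigma>) t) at_top"
    unfolding iota_def eventually_at_top_linorder by blast
qed

lemma eventually_iota_upper_conj_pos: "eventually (\<lambda>t. 0 < iota (upper_conj \<sigma>) t) at_top"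
  using filterlim_iota_upper_conj by (simp add: filterlim_at_top_dense)

lemma upper_conj_dilation_near_zero:
  assumes "prop_P (iota (upper_conj \<sigma>)) \<gamma>"
  obtains K s0 where "1 < K" "0 < s0"
    and "\<And>s. 0 < s \<Longrightarrow> s < s0 \<Longrightarrow> upper_conj \<sigma> (s / K powr \<gamma>) \<le> K * upper_conj \<sigma> s"
proof -
  obtain K where K: "1 < K"
    and ev: "eventually (\<lambda>t. iota (upper_conj \<sigma>) (K powr \<gamma> * t) \<le> K * iota (upper_conj \<sigma>) t) at_top"
    using prop_PE[OF assms eventually_iota_upper_conj_pos] by blast
  have "eventually (\<lambda>t. upper_conj \<sigma> (inverse t / K powr \<gamma>) \<le> K * upper_conj \<sigma> (inverse t)) at_top"
    using ev by eventually_elim (simp add: iota_def divide_inverse inverse_mult_distrib mult.commute)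
  then have "eventually (\<lambda>s. upper_conj \<sigma> (s / K powr \<gamma>) \<le> K * upper_conj \<sigma> s) (at_right 0)"
    unfolding eventually_at_right_to_top .
  with K show ?thesis
    unfolding eventually_at_right_field using that by blast
qed

lemma iota_upper_conj_dilation:
  assumes "0 < b" "0 < K"
    and dil: "\<And>y. u0 \<le> y \<Longrightarrow> \<sigma> (b * K * y) \<le> K * \<sigma> y"
  shows "eventually (\<lambda>t. iota (upper_conj \<sigma>) (b * t) \<le> K * iota (upper_conj \<sigma>) t) at_top"
  using filterlim_iota_upper_conj[unfolded filterlim_at_top, rule_format, of "\<sigma> (b * K * u0) / K"]
    eventually_gt_at_top[of 0]
proof eventually_elim
  case (elim t)
  have "upper_conj \<sigma> (1 / (b * t)) \<le> K * upper_conj \<sigma> (1 / t)"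
  proof (rule upper_conj_le)
    fix x :: real
    assume "0 \<le> x"
    define y where "y = x / (b * K)"
    have y: "0 \<le> y" "x = b * K * y"
      using \<open>0 \<le> x\<close> assms by (auto simp: y_def)
    have "1 / (b * t) * x = K * (y / t)"
      using y assms elim by (simp add: field_simps)
    moreover have "\<sigma> x - K * (y / t) \<le> K * upper_conj \<sigma> (1 / t)"
    proof (cases "u0 \<le> y")
      case True
      have "\<sigma> x - K * (y / t) \<le> K * (\<sigma> y - 1 / t * y)"
        using dil[OF True] y by (simp add: algebra_simps)
      also have "\<dots> \<le> K * upper_conj \<sigma> (1 / t)"
        using upper_conj_ge[of "1 / t" y] y elim assms by simp
      finally show ?thesis .
    next
      case False
      have "\<sigma> x \<le> \<sigma> (b * K * u0)"
        using False y assms by (intro mono_le) auto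
      also have "\<dots> \<le> K * upper_conj \<sigma> (1 / t)"
        using elim assms by (simp add: iota_def divide_le_eq mult.commute)
      moreover have "0 \<le> K * (y / t)"
        using y elim assms by simp
      ultimately show ?thesis
        by linarith
    qed
    ultimately show "\<sigma> x - 1 / (b * t) * x \<le> K * upper_conj \<sigma> (1 / t)"
      by simp
  qed
  then show ?case
    by (simp add: iota_def)
qed

lemma prop_P_iota_upper_conj:
  assumes "1 < \<gamma>" "prop_P \<sigma> \<gamma>" "0 < \<gamma>'" "\<gamma>' < \<gamma> - 1"
  shows "prop_P (iota (upper_conj \<sigma>)) \<gamma>'"
proof -
  obtain K where K: "1 < K" and "eventually (\<lambda>t. \<sigma> (K powr \<gamma> * t) \<le> K * \<sigma> t) at_top"
    using prop_PE[OF assms(2) eventually_pos] by blast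
  then obtain u0 where u0: "\<And>y. u0 \<le> y \<Longrightarrow> \<sigma> (K powr \<gamma> * y) \<le> K * \<sigma> y"
    by (auto simp: eventually_at_top_linorder)
  define M where "M = K powr ((\<gamma> - 1) / \<gamma>')"
  have "1 < (\<gamma> - 1) / \<gamma>'"
    using assms by (simp add: field_simps)
  then have "K < M"
    unfolding M_def using powr_less_mono[OF _ K, of 1] K by simp
  have "M powr \<gamma>' = K powr (\<gamma> - 1)"
    using assms by (simp add: M_def powr_powr)
  then have "M powr \<gamma>' * K = K powr \<gamma>"
    using K powr_add[of K "\<gamma> - 1" 1] by simp
  then have "eventually (\<lambda>t. iota (upper_conj \<sigma>) (M powr \<gamma>' * t) \<le> K * iota (upper_conj \<sigma>) t) at_top"
    using K by (intro iota_upper_conj_dilation[of _ _ u0]) (auto intro: u0)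
  with K \<open>K < M\<close> show ?thesis
    by (intro prop_PI eventually_iota_upper_conj_pos) auto
qed

end

locale biconjugate_equiv = sublinear_growth +
  fixes C :: real
  assumes C_ge_1: "1 \<le> C"
    and below: "\<And>t. 0 \<le> t \<Longrightarrow> lower_conj (upper_conj \<sigma>) t / C - C \<le> \<sigma> t"
    and above: "\<And>t. 0 \<le> t \<Longrightarrow> \<sigma> t \<le> C * lower_conj (upper_conj \<sigma>) t + C"
begin

lemma prop_P_if_biconjugate_dilation:
  assumes "1 < M" "0 \<le> F" "C\<^sup>2 * F < M"
    and dil: "eventually (\<lambda>u. lower_conj (upper_conj \<sigma>) (M powr \<gamma> * u)
                               \<le> F * lower_conj (upper_conj \<sigma>) u) at_top"
  shows "prop_P \<sigma> \<gamma>"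
proof -
  define c where "c = (C\<^sup>2 * F + M) / 2"
  have c: "C\<^sup>2 * F < c" "c < M"
    using assms(3) unfolding c_def by (auto simp: mult.commute)
  define D where "D = (C ^ 3 * F + C) / (c - C\<^sup>2 * F)"
  have "eventually (\<lambda>u. \<sigma> (M powr \<gamma> * u) \<le> c * \<sigma> u) at_top"
    using dil eventually_ge_at_top[of 0] tendsto_top[unfolded filterlim_at_top, rule_format, of D]
  proof eventually_elim
    case (elim u)
    let ?\<tau> = "lower_conj (upper_conj \<sigma>)"
    have "0 < C"
      using C_ge_1 by simp
    have "?\<tau> u \<le> C * \<sigma> u + C\<^sup>2"
      using below[of u] elim \<open>0 < C\<close> by (simp add: field_simps power2_eq_square)
    have "\<sigma> (M powr \<gamma> * u) \<le> C * ?\<tau> (M powr \<gamma> * u) + C"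
      using above elim by simp
    also have "\<dots> \<le> C * (F * ?\<tau> u) + C"
      using elim \<open>0 < C\<close> by simp
    also have "\<dots> \<le> C * (F * (C * \<sigma> u + C\<^sup>2)) + C"
      using \<open>?\<tau> u \<le> C * \<sigma> u + C\<^sup>2\<close> \<open>0 < C\<close> assms by (simp add: mult_left_mono)
    also have "\<dots> = C\<^sup>2 * F * \<sigma> u + (C ^ 3 * F + C)"
      by (simp add: algebra_simps power2_eq_square power3_eq_cube)
    also have "C ^ 3 * F + C = D * (c - C\<^sup>2 * F)"
      using c by (simp add: D_def)
    also have "D * (c - C\<^sup>2 * F) \<le> \<sigma> u * (c - C\<^sup>2 * F)"
      using elim c by (simp add: mult_right_mono)
    finally show ?case
      by (simp add: algebra_simps)
  qed
  with c show ?thesis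
    by (intro prop_PI[OF \<open>1 < M\<close>] eventually_pos) auto
qed

lemma prop_P_below_one:
  assumes "0 < \<gamma>" "\<gamma> < 1"
  shows "prop_P \<sigma> \<gamma>"
proof -
  define M where "M = (C\<^sup>2 + 1) powr (1 / (1 - \<gamma>))"
  have "1 < C\<^sup>2 + 1"
    using C_ge_1 by simp
  then have "1 < M"
    unfolding M_def using assms by (intro gr_one_powr) auto
  have "M powr (1 - \<gamma>) = C\<^sup>2 + 1"
    unfolding M_def using assms \<open>1 < C\<^sup>2 + 1\<close> by (simp add: powr_powr)
  then have "C\<^sup>2 * M powr \<gamma> = M - M powr \<gamma>"
    using \<open>1 < M\<close> powr_add[of M \<gamma> "1 - \<gamma>"] by (simp add: algebra_simps)
  moreover have "0 < M powr \<gamma>"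
    using \<open>1 < M\<close> by simp
  ultimately have "C\<^sup>2 * M powr \<gamma> < M"
    by linarith
  moreover have "1 \<le> M powr \<gamma>"
    using \<open>1 < M\<close> assms by (simp add: ge_one_powr_ge_zero)
  moreover have "eventually (\<lambda>u. lower_conj (upper_conj \<sigma>) (M powr \<gamma> * u)
                                \<le> M powr \<gamma> * lower_conj (upper_conj \<sigma>) u) at_top"
    using eventually_ge_at_top[of 0]
    by eventually_elim (intro lower_conj_mult_le upper_conj_nonneg \<open>1 \<le> M powr \<gamma>\<close>)
  ultimately show ?thesis
    using \<open>1 < M\<close> by (intro prop_P_if_biconjugate_dilation[of M "M powr \<gamma>"]) auto
qed

lemma prop_P_from_iota_upper_conj:
  assumes "0 < \<gamma>" "prop_P (iota (upper_conj \<sigma>)) \<gamma>" "0 < \<gamma>'" "\<gamma>' < \<gamma> + 1"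
  shows "prop_P \<sigma> \<gamma>'"
proof -
  obtain K s0 where K: "1 < K" and "0 < s0"
    and step: "\<And>s. 0 < s \<Longrightarrow> s < s0 \<Longrightarrow> upper_conj \<sigma> (s / K powr \<gamma>) \<le> K * upper_conj \<sigma> s"
    using upper_conj_dilation_near_zero[OF assms(2)] by blast
  define a where "a = K powr \<gamma>"
  have "1 \<le> a"
    using K assms by (simp add: a_def ge_one_powr_ge_zero)
  define \<delta> where "\<delta> = (\<gamma> + 1) / \<gamma>' - 1"
  have "0 < \<delta>"
    using assms by (simp add: \<delta>_def field_simps)
  \<comment> \<open>K^(n \<delta>) absorbs the factor C^2 lost by passing twice through \<sigma> \<sim> \<tau>\<close>
  then obtain n where n: "C\<^sup>2 < (K powr \<delta>) ^ n"
    using real_arch_pow[of "K powr \<delta>" "C\<^sup>2"] K by auto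
  have "0 < n"
    using n one_le_power[OF C_ge_1, of 2] by (cases n) auto
  define M where "M = (K powr \<delta> * K) ^ n"
  have "K powr \<delta> * K = K powr ((\<gamma> + 1) / \<gamma>')"
    using K powr_add[of K \<delta> 1] by (simp add: \<delta>_def)
  then have "M powr \<gamma>' = K powr (real n * (\<gamma> + 1))"
    using K assms by (simp add: M_def powr_power powr_powr)
  also have "\<dots> = (a * K) ^ n"
    using K powr_add[of K \<gamma> 1] by (simp add: a_def powr_power[symmetric] mult.commute)
  finally have M_powr: "M powr \<gamma>' = a ^ n * K ^ n"
    by (simp add: power_mult_distrib)
  have "1 < K powr \<delta> * K"
    using K \<open>0 < \<delta>\<close> by (simp add: less_1_mult)
  then have "1 < M"
    using \<open>0 < n\<close> by (simp add: M_def one_less_power)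
  have "C\<^sup>2 * K ^ n < M"
    using n K by (simp add: M_def power_mult_distrib)
  have "eventually (\<lambda>u. lower_conj (upper_conj \<sigma>) (a ^ n * K ^ n * u)
                        \<le> K ^ n * lower_conj (upper_conj \<sigma>) u) at_top"
    using \<open>1 \<le> a\<close> K \<open>0 < s0\<close>
    by (intro lower_conj_dilation upper_conj_nonneg dilation_bound_power[of a K s0] step[folded a_def]) auto
  then show ?thesis
    using \<open>1 < M\<close> \<open>C\<^sup>2 * K ^ n < M\<close> K
    by (intro prop_P_if_biconjugate_dilation[of M "K ^ n"]) (auto simp: M_powr)
qed

end

theorem proposition2p21:
  fixes \<sigma> :: "real \<Rightarrow> real"
  assumes "mono_on {0..} \<sigma>"
    and "\<And>t. t \<ge> 0 \<Longrightarrow> \<sigma> t \<ge> 0"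
    and "filterlim \<sigma> at_top at_top"
    and "\<sigma> \<in> o[at_top](\<lambda>t. t)"
    and "equiv_on {0..} \<sigma> (lower_conj (upper_conj \<sigma>))"
  shows "gamma_idx \<sigma> = gamma_idx (iota (upper_conj \<sigma>)) + 1"
proof -
  interpret sublinear_growth \<sigma>
    using assms(1-4) by unfold_locales
  obtain C where "1 \<le> C" and "\<forall>t\<in>{0..}. lower_conj (upper_conj \<sigma>) t / C - C \<le> \<sigma> t
                                   \<and> \<sigma> t \<le> C * lower_conj (upper_conj \<sigma>) t + C"
    using assms(5) unfolding equiv_on_def by blast
  then interpret biconjugate_equiv \<sigma> C
    by unfold_locales auto
  show ?thesis
  proof (rule antisym)
    show "gamma_idx \<sigma> \<le> gamma_idx (iota (upper_conj \<sigma>)) + 1"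
      using prop_P_iota_upper_conj by (rule gamma_idx_le_plus_one)
    show "gamma_idx (iota (upper_conj \<sigma>)) + 1 \<le> gamma_idx \<sigma>"
      using prop_P_below_one prop_P_from_iota_upper_conj by (rule plus_one_le_gamma_idx)
  qed
qed

end
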